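(* If a set of tasks $\mathcal{S}\subseteq\mathcal{T}$ admits a feasible schedule on $C$ machines, then $\mu_m^C(\mathcal{S})\le C\cdot\tau_m$ for all $m\in\{0,1,\dots,L\}$.
   Context: Model: $C$ identical machines; finite task set $\mathcal{T}$. Task $T_i$ has workload $D_i\in\mathbb{Z}^+$, deadline $d_i\in\mathbb{Z}^+$, parallelism bound $k_i\in\mathbb{Z}^+$. Slots are $1,\dots,d$ with $d=\max_i d_i$. A feasible schedule of $\mathcal{S}$ on $C$ machines is a family of functions $y_i:\{1,\dots,d_i\}\to\{0,\dots,k_i\}$ ($T_i\in\mathcal{S}$) with $\sum_{t\le d_i}y_i(t)\ge D_i$ for all $T_i\in\mathcal{S}$ and $\sum_{T_i\in\mathcal{S}}y_i(t)\le C$ for every slot $t$. Let $len_j=\lceil D_j/k_j\rceil$; let $0=\tau_0<\tau_1<\dots<\tau_L=d$ where $\{\tau_1,\dots,\tau_L\}$ is the set of distinct deadlines of tasks in $\mathcal{T}$. For $m\in\{0,\dots,L\}$, $\lambda_m(\mathcal{S})=\sum_{T_j\in\mathcal{S},\,d_j>\tau_{L-m}} c_j^{(m)}$ with $c_j^{(m)}=D_j$ if $len_j\le d_j-\tau_{L-m}$ and $c_j^{(m)}=k_j(d_j-\tau_{L-m})$ otherwise. $\lambda_0^C(\mathcal{S})=0$ and $\lambda_m^C(\mathcal{S})=\lambda_{m-1}^C(\mathcal{S})+\min\{\lambda_m(\mathcal{S})-\lambda_{m-1}^C(\mathcal{S}),\ C(\tau_{L-m+1}-\tau_{L-m})\}$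 for $m\ge1$. Finally $\mu_m^C(\mathcal{S})=\sum_{T_j\in\mathcal{S}}D_j-\lambda_{L-m}^C(\mathcal{S})$. The condition in the claim is called the boundary condition. *)

theory Defs
  imports Complex_Main
begin

text \<open>Tasks are elements of a type 'a; the finite task set is T.
  D i = workload, dl i = deadline, k i = parallelism bound.\<close>

definition feasible_schedule ::
  "nat \<Rightarrow> 'a set \<Rightarrow> ('a \<Rightarrow> nat) \<Rightarrow> ('a \<Rightarrow> nat) \<Rightarrow> ('a \<Rightarrow> nat) \<Rightarrow> ('a \<Rightarrow> nat \<Rightarrow> nat) \<Rightarrow> bool" where
  "feasible_schedule C S D dl k y \<longleftrightarrow>
     (\<forall>i\<in>S. \<forall>t\<in>{1..dl i}. y i t \<le> k i) \<and>
     (\<forall>i\<in>S. (\<Sum>t\<in>{1..dl i}. y i t) \<ge> D i) \<and>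
     (\<forall>t\<in>{1..Max (dl ` S)}. (\<Sum>i\<in>{i\<in>S. t \<le> dl i}. y i t) \<le> C)"

definition admits_feasible_schedule ::
  "nat \<Rightarrow> 'a set \<Rightarrow> ('a \<Rightarrow> nat) \<Rightarrow> ('a \<Rightarrow> nat) \<Rightarrow> ('a \<Rightarrow> nat) \<Rightarrow> bool" where
  "admits_feasible_schedule C S D dl k \<longleftrightarrow> (\<exists>y. feasible_schedule C S D dl k y)"

definition numL :: "'a set \<Rightarrow> ('a \<Rightarrow> nat) \<Rightarrow> nat" where
  "numL T dl = card (dl ` T)"

text \<open>tau 0 = 0 and tau 1 < ... < tau L are the distinct deadlines.\<close>
definition tau :: "'a set \<Rightarrow> ('a \<Rightarrow> nat) \<Rightarrow> nat \<Rightarrow> nat" where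
  "tau T dl m = (if m = 0 then 0 else sorted_list_of_set (dl ` T) ! (m - 1))"

definition len :: "('a \<Rightarrow> nat) \<Rightarrow> ('a \<Rightarrow> nat) \<Rightarrow> 'a \<Rightarrow> nat" where
  "len D k j = nat \<lceil>real (D j) / real (k j)\<rceil>"

definition cjm :: "'a set \<Rightarrow> ('a \<Rightarrow> nat) \<Rightarrow> ('a \<Rightarrow> nat) \<Rightarrow> ('a \<Rightarrow> nat) \<Rightarrow> nat \<Rightarrow> 'a \<Rightarrow> nat" where
  "cjm T D dl k m j =
     (let th = tau T dl (numL T dl - m) in
      if len D k j \<le> dl j - th then D j else k j * (dl j - th))"

definition lam :: "'a set \<Rightarrow> 'a set \<Rightarrow> ('a \<Rightarrow> nat) \<Rightarrow> ('a \<Rightarrow> nat) \<Rightarrow> ('a \<Rightarrow> nat) \<Rightarrow> nat \<Rightarrow> int" where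
  "lam T S D dl k m =
     (\<Sum>j\<in>{j\<in>S. dl j > tau T dl (numL T dl - m)}. int (cjm T D dl k m j))"

fun lamC :: "nat \<Rightarrow> 'a set \<Rightarrow> 'a set \<Rightarrow> ('a \<Rightarrow> nat) \<Rightarrow> ('a \<Rightarrow> nat) \<Rightarrow> ('a \<Rightarrow> nat) \<Rightarrow> nat \<Rightarrow> int" where
  "lamC C T S D dl k 0 = 0"
| "lamC C T S D dl k (Suc m) =
     lamC C T S D dl k m +
     min (lam T S D dl k (Suc m) - lamC C T S D dl k m)
         (int C * (int (tau T dl (numL T dl - Suc m + 1)) - int (tau T dl (numL T dl - Suc m))))"

definition muC :: "nat \<Rightarrow> 'a set \<Rightarrow> 'a set \<Rightarrow> ('a \<Rightarrow> nat) \<Rightarrow> ('a \<Rightarrow> nat) \<Rightarrow> ('a \<Rightarrow> nat) \<Rightarrow> nat \<Rightarrow> int" where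
  "muC C T S D dl k m = (\<Sum>j\<in>S. int (D j)) - lamC C T S D dl k (numL T dl - m)"

end

theory Submission
  imports Defs
begin

text \<open>Fix a feasible schedule and call the backlog at time \<open>\<tau>\<close> the work of tasks in \<open>S\<close>
  still unprocessed after slot \<open>\<tau>\<close>. The backlog at \<open>\<tau>\<^sub>L\<close> is \<open>0\<close>. At \<open>\<tau> = \<tau>\<^sub>L\<^sub>-\<^sub>m\<close> it is at most
  \<open>\<lambda>\<^sub>m\<close>, since a task with \<open>d\<^sub>j > \<tau>\<close> has at most \<open>D\<^sub>j\<close> and at most \<open>k\<^sub>j (d\<^sub>j - \<tau>)\<close> work left, and
  it is at most the backlog at \<open>\<tau>\<^sub>L\<^sub>-\<^sub>m\<^sub>+\<^sub>1\<close> plus the capacity \<open>C (\<tau>\<^sub>L\<^sub>-\<^sub>m\<^sub>+\<^sub>1 - \<tau>\<^sub>L\<^sub>-\<^sub>m)\<close> of the slots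
  in between; by induction on \<open>m\<close> it is at most \<open>\<lambda>\<^sup>C\<^sub>m\<close>. The backlog at time \<open>0\<close> is the total
  workload, so the capacity bound between \<open>0\<close> and \<open>\<tau>\<^sub>m\<close> gives \<open>\<Sum> D\<^sub>j \<le> \<lambda>\<^sup>C\<^sub>L\<^sub>-\<^sub>m + C \<tau>\<^sub>m\<close>.\<close>

definition window_work :: "('a \<Rightarrow> nat) \<Rightarrow> ('a \<Rightarrow> nat \<Rightarrow> nat) \<Rightarrow> 'a \<Rightarrow> nat \<Rightarrow> nat \<Rightarrow> nat" where
  "window_work dl y j a b = (\<Sum>t\<in>{a<..b}. if t \<le> dl j then y j t else 0)"

text \<open>Truncated subtraction is intended: work done beyond \<open>D j\<close> leaves nothing remaining.\<close>
definition remaining_work ::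
  "('a \<Rightarrow> nat) \<Rightarrow> ('a \<Rightarrow> nat) \<Rightarrow> ('a \<Rightarrow> nat \<Rightarrow> nat) \<Rightarrow> 'a \<Rightarrow> nat \<Rightarrow> nat" where
  "remaining_work D dl y j \<tau> = D j - window_work dl y j 0 \<tau>"

definition backlog ::
  "'a set \<Rightarrow> ('a \<Rightarrow> nat) \<Rightarrow> ('a \<Rightarrow> nat) \<Rightarrow> ('a \<Rightarrow> nat \<Rightarrow> nat) \<Rightarrow> nat \<Rightarrow> nat" where
  "backlog S D dl y \<tau> = (\<Sum>j\<in>S. remaining_work D dl y j \<tau>)"

lemma window_work_split:
  assumes "a \<le> b" "b \<le> c"
  shows "window_work dl y j a c = window_work dl y j a b + window_work dl y j b c"
proof -
  have "{a<..c} = {a<..b} \<union> {b<..c}" using assms by auto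
  then show ?thesis unfolding window_work_def by (simp add: sum.union_disjoint ivl_disj_int)
qed

lemma window_work_from_0:
  assumes "dl j \<le> b"
  shows "window_work dl y j 0 b = (\<Sum>t\<in>{1..dl j}. y j t)"
proof -
  have "window_work dl y j 0 b = (\<Sum>t\<in>{t\<in>{0<..b}. t \<le> dl j}. y j t)"
    unfolding window_work_def by (rule sum.inter_filter[symmetric]) simp
  also have "{t\<in>{0<..b}. t \<le> dl j} = {1..dl j}" using assms by auto
  finally show ?thesis .
qed

lemma feasible_window_work_le_parallelism:
  assumes "feasible_schedule C S D dl k y" "j \<in> S"
  shows "window_work dl y j a b \<le> k j * (b - a)"
proof -
  have "window_work dl y j a b \<le> (\<Sum>t\<in>{a<..b}. k j)"
    unfolding window_work_def
    by (rule sum_mono) (use assms in \<open>auto simp: feasible_schedule_def\<close>)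
  then show ?thesis by (simp add: mult.commute)
qed

lemma feasible_window_work_le_capacity:
  assumes feasible: "feasible_schedule C S D dl k y" and "finite S"
  shows "(\<Sum>j\<in>S. window_work dl y j a b) \<le> C * (b - a)"
proof -
  have "(\<Sum>j\<in>S. window_work dl y j a b) = (\<Sum>t\<in>{a<..b}. \<Sum>i\<in>{i\<in>S. t \<le> dl i}. y i t)"
    unfolding window_work_def using \<open>finite S\<close> by (subst sum.swap) (simp add: sum.inter_filter)
  also have "\<dots> \<le> (\<Sum>t\<in>{a<..b}. C)"
  proof (rule sum_mono)
    fix t assume t: "t \<in> {a<..b}"
    show "(\<Sum>i\<in>{i\<in>S. t \<le> dl i}. y i t) \<le> C"
    proof (cases "\<exists>i\<in>S. t \<le> dl i")
      case True
      then obtain i where "i \<in> S" "t \<le> dl i" by blast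
      with \<open>finite S\<close> t have "t \<in> {1..Max (dl ` S)}"
        by (auto intro: le_trans[OF _ Max_ge])
      with feasible show ?thesis unfolding feasible_schedule_def by blast
    next
      case False
      then have "{i\<in>S. t \<le> dl i} = {}" by blast
      then show ?thesis by (metis sum.empty le0)
    qed
  qed
  finally show ?thesis by (simp add: mult.commute)
qed

lemma remaining_work_after_deadline:
  assumes "feasible_schedule C S D dl k y" "j \<in> S" "dl j \<le> \<tau>"
  shows "remaining_work D dl y j \<tau> = 0"
  using assms window_work_from_0[of dl j \<tau> y]
  unfolding remaining_work_def feasible_schedule_def by simp

lemma remaining_work_le_window:
  assumes "a \<le> b"
  shows "remaining_work D dl y j a \<le> remaining_work D dl y j b + window_work dl y j a b"
  using window_work_split[of 0 a b dl y j] assms unfolding remaining_work_def by simp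

lemma remaining_work_le_cjm_bound:
  assumes feasible: "feasible_schedule C S D dl k y" and "j \<in> S" "\<tau> < dl j"
  shows "remaining_work D dl y j \<tau> \<le> (if len D k j \<le> dl j - \<tau> then D j else k j * (dl j - \<tau>))"
proof -
  have "remaining_work D dl y j \<tau> \<le> window_work dl y j \<tau> (dl j)"
    using remaining_work_le_window[of \<tau> "dl j" D dl y j]
      remaining_work_after_deadline[OF feasible \<open>j \<in> S\<close>, of "dl j"] \<open>\<tau> < dl j\<close> by simp
  also have "\<dots> \<le> k j * (dl j - \<tau>)"
    by (rule feasible_window_work_le_parallelism[OF feasible \<open>j \<in> S\<close>])
  finally show ?thesis by (simp add: remaining_work_def)
qed

lemma backlog_0: "backlog S D dl y 0 = (\<Sum>j\<in>S. D j)"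
  by (simp add: backlog_def remaining_work_def window_work_def)

lemma backlog_le_capacity:
  assumes "feasible_schedule C S D dl k y" "finite S" "a \<le> b"
  shows "backlog S D dl y a \<le> backlog S D dl y b + C * (b - a)"
proof -
  have "backlog S D dl y a \<le> (\<Sum>j\<in>S. remaining_work D dl y j b + window_work dl y j a b)"
    unfolding backlog_def by (rule sum_mono) (rule remaining_work_le_window[OF \<open>a \<le> b\<close>])
  also have "\<dots> = backlog S D dl y b + (\<Sum>j\<in>S. window_work dl y j a b)"
    by (simp add: backlog_def sum.distrib)
  finally show ?thesis
    using feasible_window_work_le_capacity[OF assms(1,2), of a b] by linarith
qed

lemma tau_mono:
  assumes "finite T" "i \<le> j" "j \<le> numL T dl"
  shows "tau T dl i \<le> tau T dl j"
proof (cases "i = 0")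
  case False
  with assms show ?thesis unfolding tau_def numL_def
    by (auto intro!: sorted_nth_mono)
qed (simp add: tau_def)

lemma deadline_le_tau_numL:
  assumes "finite T" "j \<in> T"
  shows "dl j \<le> tau T dl (numL T dl)"
proof -
  let ?xs = "sorted_list_of_set (dl ` T)"
  have len: "length ?xs = numL T dl" using assms by (simp add: numL_def)
  obtain i where i: "i < length ?xs" "?xs ! i = dl j"
    using assms by (metis imageI in_set_conv_nth set_sorted_list_of_set finite_imageI)
  have "?xs ! i \<le> ?xs ! (numL T dl - 1)" using i len by (intro sorted_nth_mono) auto
  with i len show ?thesis unfolding tau_def by simp
qed

lemma backlog_le_lam:
  assumes feasible: "feasible_schedule C S D dl k y" and "finite S"
  shows "int (backlog S D dl y (tau T dl (numL T dl - n))) \<le> lam T S D dl k n"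
proof -
  let ?\<tau> = "tau T dl (numL T dl - n)"
  have "backlog S D dl y ?\<tau> = (\<Sum>j\<in>{j\<in>S. ?\<tau> < dl j}. remaining_work D dl y j ?\<tau>)"
    unfolding backlog_def using \<open>finite S\<close>
    by (intro sum.mono_neutral_right)
      (use remaining_work_after_deadline[OF feasible] in \<open>auto simp: not_less\<close>)
  then show ?thesis unfolding lam_def
    by (simp add: of_nat_sum, intro sum_mono)
       (use remaining_work_le_cjm_bound[OF feasible] in \<open>auto simp: cjm_def Let_def\<close>)
qed

lemma backlog_le_lamC:
  assumes feasible: "feasible_schedule C S D dl k y"
    and "finite T" "S \<subseteq> T" "n \<le> numL T dl"
  shows "int (backlog S D dl y (tau T dl (numL T dl - n))) \<le> lamC C T S D dl k n"
  using \<open>n \<le> numL T dl\<close>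
proof (induction n)
  case 0
  have "backlog S D dl y (tau T dl (numL T dl)) = 0"
    unfolding backlog_def using assms(3)
    by (intro sum.neutral ballI remaining_work_after_deadline[OF feasible]
        deadline_le_tau_numL[OF \<open>finite T\<close>]) auto
  then show ?case by simp
next
  case (Suc n)
  let ?a = "tau T dl (numL T dl - Suc n)" and ?b = "tau T dl (numL T dl - n)"
  have finite_S: "finite S" using assms(2,3) finite_subset by blast
  have succ: "numL T dl - Suc n + 1 = numL T dl - n" using Suc.prems by simp
  have "?a \<le> ?b" using Suc.prems tau_mono[OF \<open>finite T\<close>] by simp
  then have "int (C * (?b - ?a)) = int C * (int ?b - int ?a)" by (simp add: of_nat_diff)
  then have "int (backlog S D dl y ?a) \<le> lamC C T S D dl k n + int C * (int ?b - int ?a)"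
    using backlog_le_capacity[OF feasible finite_S \<open>?a \<le> ?b\<close>] Suc by linarith
  moreover have "int (backlog S D dl y ?a) \<le> lam T S D dl k (Suc n)"
    using backlog_le_lam[OF feasible finite_S, of T "Suc n"] by simp
  ultimately show ?case using succ by (simp add: min_def)
qed

theorem lemma2:
  fixes C :: nat and T S :: "'a set" and D dl k :: "'a \<Rightarrow> nat"
  assumes "finite T"
    and "\<forall>i\<in>T. D i > 0 \<and> dl i > 0 \<and> k i > 0"
    and "S \<subseteq> T"
    and "admits_feasible_schedule C S D dl k"
  shows "\<forall>m\<in>{0..numL T dl}. muC C T S D dl k m \<le> int C * int (tau T dl m)"
proof
  fix m assume m: "m \<in> {0..numL T dl}"
  obtain y where feasible: "feasible_schedule C S D dl k y"
    using assms(4) unfolding admits_feasible_schedule_def by blast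
  have "finite S" using assms(1,3) finite_subset by blast
  have "(\<Sum>j\<in>S. D j) \<le> backlog S D dl y (tau T dl m) + C * tau T dl m"
    using backlog_le_capacity[OF feasible \<open>finite S\<close>, of 0 "tau T dl m"] by (simp add: backlog_0)
  then have "int (\<Sum>j\<in>S. D j) \<le> int (backlog S D dl y (tau T dl m)) + int C * int (tau T dl m)"
    by (simp only: of_nat_add[symmetric] of_nat_mult[symmetric] of_nat_le_iff)
  moreover have "int (backlog S D dl y (tau T dl m)) \<le> lamC C T S D dl k (numL T dl - m)"
    using backlog_le_lamC[OF feasible assms(1,3), of "numL T dl - m"] m by simp
  moreover have "(\<Sum>j\<in>S. int (D j)) = int (\<Sum>j\<in>S. D j)" by simp
  ultimately show "muC C T S D dl k m \<le> int C * int (tau T dl m)"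
    unfolding muC_def by linarith
qed

end
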